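(* Let $K=\langle g,\gamma\rangle$ be a non-trivial torsion-free group, and suppose that for every nonzero $n\in\mathbb{Z}$ we have $\gamma^n\notin\langle\langle g\rangle\rangle_K$. Then there is a finitely generated torsion-free group $\Gamma$ and a non-trivial element $a\in\Gamma$ such that: (1) $K$ embeds as a subgroup of $\Gamma$ (identify $g,\gamma$ with their images); (2) the commutator $[a,\gamma]$ is non-trivial and centralizes $g$; (3) $[a,g]=1$.
   Context: $\langle\langle g\rangle\rangle_K$ denotes the normal closure of $g$ in $K$; $[x,y]$ denotes the group commutator. *)

theory Defs
  imports "HOL-Algebra.Algebra"
begin

definition commutator :: "('a, 'b) monoid_scheme \<Rightarrow> 'a \<Rightarrow> 'a \<Rightarrow> 'a" where
  "commutator G x y = inv\<^bsub>G\<^esub> x \<otimes>\<^bsub>G\<^esub> inv\<^bsub>G\<^esub> y \<otimes>\<^bsub>G\<^esub> x \<otimes>\<^bsub>G\<^esub> y"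

definition normal_closure :: "('a, 'b) monoid_scheme \<Rightarrow> 'a set \<Rightarrow> 'a set" where
  "normal_closure G S =
     generate G (\<Union>h \<in> carrier G. \<Union>s \<in> S. {h \<otimes>\<^bsub>G\<^esub> s \<otimes>\<^bsub>G\<^esub> inv\<^bsub>G\<^esub> h})"

definition torsion_free :: "('a, 'b) monoid_scheme \<Rightarrow> bool" where
  "torsion_free G \<longleftrightarrow>
     (\<forall>x \<in> carrier G. \<forall>n::nat. n > 0 \<and> x [^]\<^bsub>G\<^esub> n = \<one>\<^bsub>G\<^esub> \<longrightarrow> x = \<one>\<^bsub>G\<^esub>)"

definition finitely_generated :: "('a, 'b) monoid_scheme \<Rightarrow> bool" where
  "finitely_generated G \<longleftrightarrow>
     (\<exists>S. finite S \<and> S \<subseteq> carrier G \<and> generate G S = carrier G)"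

end

theory Submission
  imports Defs
begin

(* Let N be the normal closure of g. As K = <g, \<gamma>> and no nonzero power of \<gamma> lies in N,
   the quotient K/N is infinite cyclic on the coset of \<gamma>, which yields a homomorphism
   p : K \<rightarrow> \<int> with p \<gamma> = 1 and p g = 0. Its parity s = (-1)^p is a sign character of K, and
   the semidirect product \<Gamma> of \<int> by K, with K acting on \<int> through s, is finitely generated
   and torsion-free. For a = (1, 1) and x in K one finds [a, x] = (s x - 1, 1): so
   [a, \<gamma>] = (-2, 1) is non-trivial and commutes with g (as s g = 1), while [a, g] = 1. Being countable, \<Gamma> can finally be carried over to a group on nat. *)

lemma (in group) normal_closure_normal:
  assumes "S \<subseteq> carrier G"
  shows "normal_closure G S \<lhd> G"
proof -
  define C where "C = (\<Union>h \<in> carrier G. \<Union>s \<in> S. {h \<otimes> s \<otimes> inv h})"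
  have C: "C \<subseteq> carrier G" using assms unfolding C_def by auto
  show ?thesis unfolding normal_inv_iff normal_closure_def C_def[symmetric]
  proof (intro conjI ballI)
    show "subgroup (generate G C) G" by (rule generate_is_subgroup[OF C])
    fix x h assume x: "x \<in> carrier G" and h: "h \<in> generate G C"
    have conj: "group_hom G G (\<lambda>y. x \<otimes> y \<otimes> inv x)"
      by (intro group_hom.intro group_hom_axioms.intro homI is_group)
        (use x in \<open>auto simp: m_assoc simp flip: m_assoc[of "inv x" x]\<close>)
    have "(\<lambda>y. x \<otimes> y \<otimes> inv x) ` C \<subseteq> C"
    proof
      fix y assume "y \<in> (\<lambda>y. x \<otimes> y \<otimes> inv x) ` C"
      then obtain k s where ks: "k \<in> carrier G" "s \<in> S" "y = x \<otimes> (k \<otimes> s \<otimes> inv k) \<otimes> inv x"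
        unfolding C_def by auto
      then have "y = (x \<otimes> k) \<otimes> s \<otimes> inv (x \<otimes> k)"
        using x assms by (auto simp: m_assoc inv_mult_group)
      then show "y \<in> C" unfolding C_def using ks x by auto
    qed
    then have "generate G ((\<lambda>y. x \<otimes> y \<otimes> inv x) ` C) \<subseteq> generate G C"
      by (rule mono_generate)
    then show "x \<otimes> h \<otimes> inv x \<in> generate G C"
      using group_hom.generate_img[OF conj C] h by auto
  qed
qed

lemma (in group) subset_normal_closure:
  assumes "S \<subseteq> carrier G"
  shows "S \<subseteq> normal_closure G S"
proof
  fix s assume "s \<in> S"
  then have "s \<in> (\<Union>h \<in> carrier G. \<Union>t \<in> S. {h \<otimes> t \<otimes> inv h})"
    using assms by (intro UN_I[OF one_closed] UN_I[of s]) auto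
  then show "s \<in> normal_closure G S"
    unfolding normal_closure_def by (rule generate.incl)
qed

lemma (in group) carrier_FactGroup_eq_powers:
  assumes N: "N \<lhd> G" and c: "c \<in> carrier G"
    and gen: "generate G (insert c N) = carrier G"
  shows "carrier (G Mod N) = range (\<lambda>k::int. (N #> c) [^]\<^bsub>G Mod N\<^esub> k)"
proof -
  interpret N: normal N G by (rule N)
  let ?Q = "G Mod N" and ?\<pi> = "\<lambda>x. N #> x"
  have Q: "group ?Q" by (rule N.factorgroup_is_group)
  have \<pi>: "group_hom G ?Q ?\<pi>"
    by (intro group_hom.intro group_hom_axioms.intro is_group Q N.r_coset_hom_Mod)
  have \<pi>c: "?\<pi> c \<in> carrier ?Q" using c by (simp add: carrier_FactGroup)
  have "?\<pi> ` insert c N \<subseteq> generate ?Q {?\<pi> c}"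
  proof
    fix y assume "y \<in> ?\<pi> ` insert c N"
    then consider "y = ?\<pi> c" | "y = \<one>\<^bsub>?Q\<^esub>"
      using N.rcos_const[OF is_group] by auto
    then show "y \<in> generate ?Q {?\<pi> c}"
      using generate.one[of ?Q] by cases (auto intro: generate.incl)
  qed
  then have "generate ?Q (?\<pi> ` insert c N) \<subseteq> generate ?Q {?\<pi> c}"
    using group.generate_subgroup_incl[OF Q _ group.generate_is_subgroup[OF Q]] \<pi>c by simp
  moreover have "generate ?Q (?\<pi> ` insert c N) = carrier ?Q"
    using group_hom.generate_img[OF \<pi>, of "insert c N"] gen c N.subset
    by (simp add: carrier_FactGroup)
  ultimately have "carrier ?Q = generate ?Q {?\<pi> c}"
    using group.generate_incl[OF Q] \<pi>c by blast
  then show ?thesis using group.generate_pow[OF Q \<pi>c] by auto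
qed

lemma (in group) exponent_hom_exists:
  assumes N: "N \<lhd> G" and c: "c \<in> carrier G"
    and gen: "generate G (insert c N) = carrier G"
    and free: "\<And>k::int. k \<noteq> 0 \<Longrightarrow> c [^] k \<notin> N"
  shows "\<exists>p \<in> hom G integer_group. p c = 1 \<and> (\<forall>x\<in>N. p x = 0)"
proof -
  interpret N: normal N G by (rule N)
  let ?Q = "G Mod N" and ?\<pi> = "\<lambda>x. N #> x"
  have Q: "group ?Q" by (rule N.factorgroup_is_group)
  have \<pi>c: "?\<pi> c \<in> carrier ?Q" using c by (simp add: carrier_FactGroup)
  define q where "q k = ?\<pi> c [^]\<^bsub>?Q\<^esub> (k::int)" for k
  have q_\<pi>: "q k = ?\<pi> (c [^] k)" for k
    unfolding q_def using N.FactGroup_int_pow[OF c] by simp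
  have "inj q"
  proof (rule injI)
    fix i j assume "q i = q j"
    have "q (i - j) = q i \<otimes>\<^bsub>?Q\<^esub> inv\<^bsub>?Q\<^esub> q j"
      unfolding q_def by (rule group.int_pow_diff[OF Q \<pi>c])
    also have "\<dots> = \<one>\<^bsub>?Q\<^esub>"
      unfolding \<open>q i = q j\<close> unfolding q_def by (rule group.r_inv[OF Q group.int_pow_closed[OF Q \<pi>c]])
    finally have "N #> c [^] (i - j) = N" using q_\<pi> by simp
    then have "c [^] (i - j) \<in> N" using coset_join1 int_pow_closed[OF c] N.subgroup_axioms by blast
    then show "i = j" using free by (metis eq_iff_diff_eq_0)
  qed
  then have "q \<in> iso integer_group ?Q"
    using carrier_FactGroup_eq_powers[OF N c gen] group.hom_integer_group_pow[OF Q \<pi>c]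
    unfolding iso_iff q_def by auto
  then have "inv_into UNIV q \<in> hom ?Q integer_group"
    using group.iso_set_sym[OF group_integer_group] iso_imp_homomorphism by fastforce
  then have "inv_into UNIV q \<circ> ?\<pi> \<in> hom G integer_group"
    by (rule Group.hom_compose[OF N.r_coset_hom_Mod])
  moreover have "inv_into UNIV q (?\<pi> c) = 1"
    using inv_into_f_f[OF \<open>inj q\<close>, of 1] group.int_pow_1[OF Q \<pi>c] by (simp add: q_def)
  moreover have "\<forall>x\<in>N. inv_into UNIV q (?\<pi> x) = 0"
    using inv_into_f_f[OF \<open>inj q\<close>, of 0] N.rcos_const[OF is_group] by (simp add: q_def)
  ultimately show ?thesis by (intro bexI[of _ "inv_into UNIV q \<circ> ?\<pi>"]) auto
qed

lemma (in group) exponent_hom_normal_closure: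
  assumes g: "g \<in> carrier G" and c: "c \<in> carrier G"
    and gen: "generate G {g, c} = carrier G"
    and free: "\<And>k::int. k \<noteq> 0 \<Longrightarrow> c [^] k \<notin> normal_closure G {g}"
  shows "\<exists>p \<in> hom G integer_group. p c = 1 \<and> p g = 0"
proof -
  let ?N = "normal_closure G {g}"
  have N: "?N \<lhd> G" using normal_closure_normal g by simp
  have g_N: "g \<in> ?N" using subset_normal_closure[of "{g}"] g by simp
  have "generate G (insert c ?N) = carrier G"
  proof
    show "generate G (insert c ?N) \<subseteq> carrier G"
      using c subgroup.subset[OF normal_imp_subgroup[OF N]] by (intro generate_incl) simp
    show "carrier G \<subseteq> generate G (insert c ?N)"
      using mono_generate[of "{g, c}" "insert c ?N"] g_N gen by simp
  qed
  then show ?thesis using exponent_hom_exists[OF N c _ free] g_N by blast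
qed

definition int_semidirect :: "('a, 'b) monoid_scheme \<Rightarrow> ('a \<Rightarrow> int) \<Rightarrow> (int \<times> 'a) monoid" where
  "int_semidirect K s =
     \<lparr>carrier = UNIV \<times> carrier K,
      monoid.mult = (\<lambda>(m, x) (n, y). (m + s x * n, x \<otimes>\<^bsub>K\<^esub> y)),
      one = (0, \<one>\<^bsub>K\<^esub>)\<rparr>"

locale sign_character = group K for K (structure) +
  fixes s :: "'a \<Rightarrow> int"
  assumes sign_mult: "x \<in> carrier K \<Longrightarrow> y \<in> carrier K \<Longrightarrow> s (x \<otimes> y) = s x * s y"
    and sign_cases: "x \<in> carrier K \<Longrightarrow> s x = 1 \<or> s x = -1"

lemma parity_sign_character:
  assumes "group K" and "p \<in> hom K integer_group"
  shows "sign_character K (\<lambda>x. if even (p x) then 1 else -1)"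
proof -
  interpret group K by (rule assms(1))
  show ?thesis
    by unfold_locales (use hom_mult[OF assms(2)] in auto)
qed

context sign_character
begin

lemma sign_one: "s \<one> = 1"
  using sign_mult[of \<one> \<one>] sign_cases[of \<one>] by auto

lemma sign_square: "x \<in> carrier K \<Longrightarrow> s x * s x = 1"
  using sign_cases[of x] by auto

lemma sign_inv: "x \<in> carrier K \<Longrightarrow> s (inv x) = s x"
  using sign_mult[of x "inv x"] sign_cases[of x] sign_one by auto

lemma int_semidirect_carrier [simp]: "carrier (int_semidirect K s) = UNIV \<times> carrier K"
  and int_semidirect_mult [simp]: "(m, x) \<otimes>\<^bsub>int_semidirect K s\<^esub> (n, y) = (m + s x * n, x \<otimes> y)"
  and int_semidirect_one [simp]: "\<one>\<^bsub>int_semidirect K s\<^esub> = (0, \<one>)"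
  by (simp_all add: int_semidirect_def)

lemma int_semidirect_group: "group (int_semidirect K s)"
proof (rule groupI)
  fix u v w assume "u \<in> carrier (int_semidirect K s)" "v \<in> carrier (int_semidirect K s)"
    "w \<in> carrier (int_semidirect K s)"
  then show "u \<otimes>\<^bsub>int_semidirect K s\<^esub> v \<otimes>\<^bsub>int_semidirect K s\<^esub> w =
      u \<otimes>\<^bsub>int_semidirect K s\<^esub> (v \<otimes>\<^bsub>int_semidirect K s\<^esub> w)"
    by (cases u; cases v; cases w) (auto simp: sign_mult m_assoc algebra_simps)
next
  fix u assume "u \<in> carrier (int_semidirect K s)"
  then obtain m x where u: "u = (m, x)" "x \<in> carrier K" by auto
  show "\<exists>v\<in>carrier (int_semidirect K s). v \<otimes>\<^bsub>int_semidirect K s\<^esub> u = \<one>\<^bsub>int_semidirect K s\<^esub>"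
    by (rule bexI[of _ "(- s x * m, inv x)"]) (use u sign_inv sign_square in \<open>auto simp: algebra_simps\<close>)
qed (auto simp: sign_one)

lemma int_semidirect_inv:
  "x \<in> carrier K \<Longrightarrow> inv\<^bsub>int_semidirect K s\<^esub> (m, x) = (- s x * m, inv x)"
  by (rule group.inv_equality[OF int_semidirect_group]) (auto simp: sign_inv sign_square algebra_simps)

lemma snd_hom_int_semidirect: "snd \<in> hom (int_semidirect K s) K"
  by (rule homI) auto

lemma int_embed_hom_int_semidirect: "(\<lambda>m. (m, \<one>)) \<in> hom integer_group (int_semidirect K s)"
  by (rule homI) (auto simp: sign_one)

lemma embed_hom_int_semidirect: "(\<lambda>x. (0, x)) \<in> hom K (int_semidirect K s)"
  by (rule homI) auto

lemma int_semidirect_int_pow: "(n, \<one>) [^]\<^bsub>int_semidirect K s\<^esub> (k::int) = (k * n, \<one>)"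
  using hom_int_pow[OF int_embed_hom_int_semidirect _ group_integer_group int_semidirect_group, of n k]
  by simp

lemma int_semidirect_torsion_free:
  assumes "torsion_free K"
  shows "torsion_free (int_semidirect K s)"
  unfolding torsion_free_def
proof (intro ballI allI impI)
  fix u and k :: nat
  assume u: "u \<in> carrier (int_semidirect K s)"
    and torsion: "0 < k \<and> u [^]\<^bsub>int_semidirect K s\<^esub> k = \<one>\<^bsub>int_semidirect K s\<^esub>"
  obtain m x where mx: "u = (m, x)" "x \<in> carrier K" using u by auto
  have "x [^] k = \<one>"
    using hom_nat_pow[OF snd_hom_int_semidirect u int_semidirect_group is_group, of k] torsion mx
    by simp
  then have "x = \<one>" using assms mx torsion unfolding torsion_free_def by blast
  then have "(int k * m, \<one>) = u [^]\<^bsub>int_semidirect K s\<^esub> k"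
    using int_semidirect_int_pow[of m "int k"] mx by (simp add: int_pow_int)
  then have "int k * m = 0" using torsion by simp
  then show "u = \<one>\<^bsub>int_semidirect K s\<^esub>" using mx \<open>x = \<one>\<close> torsion by simp
qed

lemma int_semidirect_finitely_generated:
  assumes "finitely_generated K"
  shows "finitely_generated (int_semidirect K s)"
proof -
  let ?G = "int_semidirect K s"
  obtain S where S: "finite S" "S \<subseteq> carrier K" "generate K S = carrier K"
    using assms unfolding finitely_generated_def by blast
  define T where "T = insert (1, \<one>) ((\<lambda>x. (0::int, x)) ` S)"
  have T: "T \<subseteq> carrier ?G" using S unfolding T_def by auto
  have sub: "subgroup (generate ?G T) ?G"
    by (rule group.generate_is_subgroup[OF int_semidirect_group T])
  have "(0, x) \<in> generate ?G T" if "x \<in> carrier K" for x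
  proof -
    have "group_hom K ?G (\<lambda>x. (0, x))"
      by (intro group_hom.intro group_hom_axioms.intro is_group int_semidirect_group embed_hom_int_semidirect)
    then have "(\<lambda>x. (0::int, x)) ` carrier K = generate ?G ((\<lambda>x. (0, x)) ` S)"
      by (simp add: group_hom.generate_img[OF _ S(2)] S(3))
    also have "\<dots> \<subseteq> generate ?G T"
      unfolding T_def by (rule group.mono_generate[OF int_semidirect_group]) auto
    finally show ?thesis using that by auto
  qed
  moreover have "(m, \<one>) \<in> generate ?G T" for m
  proof -
    have "(1, \<one>) \<in> generate ?G T" by (rule generate.incl) (simp add: T_def)
    then have "(1, \<one>) [^]\<^bsub>?G\<^esub> m \<in> generate ?G T"
      by (rule group.subgroup_int_pow_closed[OF int_semidirect_group sub])
    then show ?thesis using int_semidirect_int_pow[of 1 m] by simp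
  qed
  ultimately have "(m, \<one>) \<otimes>\<^bsub>?G\<^esub> (0, x) \<in> generate ?G T" if "x \<in> carrier K" for m x
    using that by (intro subgroup.m_closed[OF sub])
  then have "carrier ?G \<subseteq> generate ?G T" by (auto simp: sign_one)
  then have "generate ?G T = carrier ?G"
    using group.generate_incl[OF int_semidirect_group T] by (rule subset_antisym[rotated])
  then show ?thesis
    unfolding finitely_generated_def using S(1) T by (intro exI[of _ T]) (simp add: T_def)
qed

lemma commutator_int_semidirect:
  assumes "x \<in> carrier K"
  shows "commutator (int_semidirect K s) (1, \<one>) (0, x) = (s x - 1, \<one>)"
  using assms by (simp add: commutator_def int_semidirect_inv sign_one sign_inv)

end

lemma (in group) countable_generate:
  assumes "countable S" "S \<subseteq> carrier G"
  shows "countable (generate G S)"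
proof -
  define word where "word l = foldr (\<otimes>) l \<one>" for l
  define T where "T = S \<union> m_inv G ` S"
  have T: "T \<subseteq> carrier G" using assms(2) unfolding T_def by auto
  have word_closed: "word l \<in> carrier G" if "set l \<subseteq> carrier G" for l
    using that unfolding word_def by (induction l) auto
  have word_append: "word (l1 @ l2) = word l1 \<otimes> word l2"
    if "set l1 \<subseteq> carrier G" "set l2 \<subseteq> carrier G" for l1 l2
    using that word_closed[OF that(2)] word_closed unfolding word_def
    by (induction l1) (auto simp: m_assoc)
  have "generate G S \<subseteq> word ` lists T"
  proof
    fix h assume "h \<in> generate G S"
    then show "h \<in> word ` lists T"
    proof induction
      case one show ?case by (rule image_eqI[of _ _ "[]"]) (auto simp: word_def)
    next
      case (incl h) then show ?case
        using assms(2) by (intro image_eqI[of _ _ "[h]"]) (auto simp: word_def T_def)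
    next
      case (inv h) then show ?case
        using assms(2) by (intro image_eqI[of _ _ "[inv h]"]) (auto simp: word_def T_def)
    next
      case (eng h1 h2)
      then obtain l1 l2 where l: "l1 \<in> lists T" "l2 \<in> lists T" "h1 = word l1" "h2 = word l2"
        by auto
      then have "set l1 \<subseteq> carrier G" "set l2 \<subseteq> carrier G" using T by auto
      then show ?case
        using l word_append[of l1 l2] by (intro image_eqI[of _ _ "l1 @ l2"]) auto
    qed
  qed
  moreover have "countable (word ` lists T)"
    using assms(1) unfolding T_def by auto
  ultimately show ?thesis by (rule countable_subset)
qed

lemma finitely_generated_countable:
  assumes "group G" and "finitely_generated G"
  shows "countable (carrier G)"
  using assms group.countable_generate[OF assms(1)] unfolding finitely_generated_def
  by (metis countable_finite)

lemma countable_group_iso_nat: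
  assumes "group G" and "countable (carrier G)"
  shows "\<exists>(H :: nat monoid) f. group H \<and> f \<in> iso G H"
proof -
  have "inj_on (to_nat_on (carrier G)) (carrier G)" using assms(2) by blast
  then show ?thesis
    using group.inj_imp_image_group_is_group[OF assms(1)] inj_imp_image_group_iso by blast
qed

lemma iso_torsion_free:
  assumes "group G" and "group H" and "f \<in> iso G H" and "torsion_free G"
  shows "torsion_free H"
  unfolding torsion_free_def
proof (intro ballI allI impI)
  fix y and n :: nat
  assume y: "y \<in> carrier H" and torsion: "0 < n \<and> y [^]\<^bsub>H\<^esub> n = \<one>\<^bsub>H\<^esub>"
  have f: "f \<in> hom G H" "inj_on f (carrier G)" "f ` carrier G = carrier H"
    using assms(3) by (auto simp: iso_iff)
  obtain x where x: "x \<in> carrier G" "y = f x" using y f(3) by auto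
  have "f (x [^]\<^bsub>G\<^esub> n) = f \<one>\<^bsub>G\<^esub>"
    using hom_nat_pow[OF f(1) x(1) assms(1,2)] hom_one[OF f(1) assms(1,2)] torsion x by simp
  then have "x [^]\<^bsub>G\<^esub> n = \<one>\<^bsub>G\<^esub>"
    using f(2) x(1) assms(1) by (auto dest: inj_onD intro: monoid.nat_pow_closed monoid.one_closed group.is_monoid)
  then have "x = \<one>\<^bsub>G\<^esub>" using assms(4) x torsion unfolding torsion_free_def by blast
  then show "y = \<one>\<^bsub>H\<^esub>" using x hom_one[OF f(1) assms(1,2)] by simp
qed

lemma iso_finitely_generated:
  assumes "group G" and "group H" and "f \<in> iso G H" and "finitely_generated G"
  shows "finitely_generated H"
proof -
  obtain S where S: "finite S" "S \<subseteq> carrier G" "generate G S = carrier G"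
    using assms(4) unfolding finitely_generated_def by blast
  have f: "f \<in> hom G H" "f ` carrier G = carrier H"
    using assms(3) by (auto simp: iso_iff)
  have "group_hom G H f"
    by (intro group_hom.intro group_hom_axioms.intro assms(1,2) f(1))
  then have "generate H (f ` S) = f ` generate G S"
    by (rule group_hom.generate_img[OF _ S(2)])
  then have "generate H (f ` S) = carrier H" using S(3) f(2) by simp
  then show ?thesis
    unfolding finitely_generated_def using S(1,2) f(2) by (intro exI[of _ "f ` S"]) auto
qed

lemma commutator_closed:
  assumes "group G" and "x \<in> carrier G" and "y \<in> carrier G"
  shows "commutator G x y \<in> carrier G"
  using assms unfolding commutator_def by (simp add: group.inv_closed group.subgroup_self subgroup.m_closed)

lemma hom_commutator:
  assumes "group G" and "group H" and "f \<in> hom G H" and "x \<in> carrier G" and "y \<in> carrier G"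
  shows "f (commutator G x y) = commutator H (f x) (f y)"
proof -
  interpret group_hom G H f by (intro group_hom.intro group_hom_axioms.intro assms(1-3))
  show ?thesis unfolding commutator_def using assms(4,5) by simp
qed

definition commutator_witness :: "('a, 'b) monoid_scheme \<Rightarrow> 'a \<Rightarrow> 'a \<Rightarrow> 'a \<Rightarrow> bool" where
  "commutator_witness G a x y \<longleftrightarrow>
     a \<in> carrier G \<and> a \<noteq> \<one>\<^bsub>G\<^esub> \<and>
     commutator G a y \<noteq> \<one>\<^bsub>G\<^esub> \<and>
     commutator G a y \<otimes>\<^bsub>G\<^esub> x = x \<otimes>\<^bsub>G\<^esub> commutator G a y \<and>
     commutator G a x = \<one>\<^bsub>G\<^esub>"

lemma commutator_witness_inj_hom:
  assumes "group G" and "group H" and "f \<in> hom G H" and "inj_on f (carrier G)"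
    and "x \<in> carrier G" and "y \<in> carrier G" and "commutator_witness G a x y"
  shows "commutator_witness H (f a) (f x) (f y)"
proof -
  interpret group_hom G H f by (intro group_hom.intro group_hom_axioms.intro assms(1-3))
  have a: "a \<in> carrier G" and w: "a \<noteq> \<one>\<^bsub>G\<^esub>" "commutator G a y \<noteq> \<one>\<^bsub>G\<^esub>"
      "commutator G a y \<otimes>\<^bsub>G\<^esub> x = x \<otimes>\<^bsub>G\<^esub> commutator G a y" "commutator G a x = \<one>\<^bsub>G\<^esub>"
    using assms(7) unfolding commutator_witness_def by auto
  have c: "commutator G a y \<in> carrier G" by (rule commutator_closed[OF assms(1) a assms(6)])
  have nontrivial: "f z \<noteq> \<one>\<^bsub>H\<^esub>" if "z \<in> carrier G" "z \<noteq> \<one>\<^bsub>G\<^esub>" for z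
    using inj_onD[OF assms(4), of z "\<one>\<^bsub>G\<^esub>"] that by auto
  have f_commutator: "commutator H (f a) (f z) = f (commutator G a z)" if "z \<in> carrier G" for z
    using hom_commutator[OF assms(1-3) a that] by simp
  show ?thesis
    unfolding commutator_witness_def f_commutator[OF assms(5)] f_commutator[OF assms(6)]
  proof (intro conjI)
    show "f a \<in> carrier H" "f a \<noteq> \<one>\<^bsub>H\<^esub>" using a w(1) nontrivial by simp_all
    show "f (commutator G a y) \<noteq> \<one>\<^bsub>H\<^esub>" using c w(2) nontrivial by simp
    show "f (commutator G a x) = \<one>\<^bsub>H\<^esub>" using w(4) by simp
    show "f (commutator G a y) \<otimes>\<^bsub>H\<^esub> f x = f x \<otimes>\<^bsub>H\<^esub> f (commutator G a y)"
      using w(3) c assms(5) by (simp flip: hom_mult)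
  qed
qed

lemma (in sign_character) commutator_witness_int_semidirect:
  assumes "x \<in> carrier K" and "y \<in> carrier K" and "s x = 1" and "s y = -1"
  shows "commutator_witness (int_semidirect K s) (1, \<one>) (0, x) (0, y)"
  using assms unfolding commutator_witness_def by (simp add: commutator_int_semidirect)

theorem lemma3p2:
  fixes K :: "('a, 'b) monoid_scheme" and g \<gamma> :: 'a
  assumes "group K"
    and "g \<in> carrier K" and "\<gamma> \<in> carrier K"
    and "generate K {g, \<gamma>} = carrier K"
    and "carrier K \<noteq> {\<one>\<^bsub>K\<^esub>}"
    and "torsion_free K"
    and "\<And>n::int. n \<noteq> 0 \<Longrightarrow> \<gamma> [^]\<^bsub>K\<^esub> n \<notin> normal_closure K {g}"
  shows "\<exists>(\<Gamma> :: nat monoid) (\<phi> :: 'a \<Rightarrow> nat) a.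
           group \<Gamma> \<and> finitely_generated \<Gamma> \<and> torsion_free \<Gamma> \<and>
           \<phi> \<in> hom K \<Gamma> \<and> inj_on \<phi> (carrier K) \<and>
           a \<in> carrier \<Gamma> \<and> a \<noteq> \<one>\<^bsub>\<Gamma>\<^esub> \<and>
           commutator \<Gamma> a (\<phi> \<gamma>) \<noteq> \<one>\<^bsub>\<Gamma>\<^esub> \<and>
           commutator \<Gamma> a (\<phi> \<gamma>) \<otimes>\<^bsub>\<Gamma>\<^esub> \<phi> g = \<phi> g \<otimes>\<^bsub>\<Gamma>\<^esub> commutator \<Gamma> a (\<phi> \<gamma>) \<and>
           commutator \<Gamma> a (\<phi> g) = \<one>\<^bsub>\<Gamma>\<^esub>"
proof -
  interpret K: group K by fact
  obtain p where p: "p \<in> hom K integer_group" "p \<gamma> = 1" "p g = 0"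
    using K.exponent_hom_normal_closure[OF assms(2,3,4,7)] by blast
  define s where "s x = (if even (p x) then 1 else -1 :: int)" for x
  interpret sign_character K s
    unfolding s_def by (rule parity_sign_character[OF assms(1) p(1)])
  let ?G = "int_semidirect K s"
  have fg: "finitely_generated ?G"
    unfolding finitely_generated_def using assms(2-4)
    by (intro int_semidirect_finitely_generated[unfolded finitely_generated_def] exI[of _ "{g, \<gamma>}"]) simp
  obtain \<Gamma> :: "nat monoid" and f where \<Gamma>: "group \<Gamma>" "f \<in> iso ?G \<Gamma>"
    using countable_group_iso_nat[OF int_semidirect_group] finitely_generated_countable[OF int_semidirect_group fg]
    by blast
  have f: "f \<in> hom ?G \<Gamma>" "inj_on f (carrier ?G)" using \<Gamma>(2) by (auto simp: iso_iff)
  have "commutator_witness \<Gamma> (f (1, \<one>\<^bsub>K\<^esub>)) (f (0, g)) (f (0, \<gamma>))"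
    using commutator_witness_inj_hom[OF int_semidirect_group \<Gamma>(1) f] assms(2,3)
      commutator_witness_int_semidirect[OF assms(2,3)] p(2,3)
    by (simp add: s_def)
  moreover have "f \<circ> Pair 0 \<in> hom K \<Gamma>" by (rule Group.hom_compose[OF embed_hom_int_semidirect f(1)])
  moreover have "inj_on (f \<circ> Pair 0) (carrier K)"
    using f(2) by (intro comp_inj_on) (auto simp: inj_on_def)
  ultimately show ?thesis
    using \<Gamma>(1) iso_finitely_generated[OF int_semidirect_group \<Gamma> fg]
      iso_torsion_free[OF int_semidirect_group \<Gamma> int_semidirect_torsion_free[OF assms(6)]]
    unfolding commutator_witness_def
    by (intro exI[of _ \<Gamma>] exI[of _ "f \<circ> Pair 0"] exI[of _ "f (1, \<one>\<^bsub>K\<^esub>)"]) simp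
qed

end
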